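(* Let $G,\Omega$ be domains in $\mathbb{C}$, let $K\subset K'$ be compact subsets of $G$, and let $\phi:G\to\Omega$ be holomorphic and injective on a neighbourhood of $K'$. If $K$ is $G$-convex and $\phi(K')$ is $\Omega$-convex, then $\phi(K)$ is $\Omega$-convex.
   Context: A hole of a set $E\subset\mathbb{C}$ is a non-empty bounded connected component of $\mathbb{C}\setminus E$. For an open set $\Omega$, a compact set $K\subset\Omega$ is $\Omega$-convex if every hole of $K$ contains a point of $\mathbb{C}\setminus\Omega$. *)

theory Defs
  imports "HOL-Complex_Analysis.Complex_Analysis"
begin

text \<open>A hole of a set E is a non-empty bounded connected component of the complement.
  (Elements of components are non-empty and connected by definition.)\<close>
definition hole :: "complex set \<Rightarrow> complex set \<Rightarrow> bool" where
  "hole E H \<longleftrightarrow> H \<in> components (- E) \<and> bounded H"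

definition omega_convex :: "complex set \<Rightarrow> complex set \<Rightarrow> bool" where
  "omega_convex \<Omega> K \<longleftrightarrow> compact K \<and> K \<subseteq> \<Omega> \<and> (\<forall>H. hole K H \<longrightarrow> H \<inter> (- \<Omega>) \<noteq> {})"

end

theory Submission
  imports Defs
begin

text \<open>Let \<open>H\<close> be a hole of \<open>\<phi> ` K\<close> inside \<open>\<Omega>\<close>. A point of \<open>H\<close> outside \<open>\<phi> ` K'\<close> would lie
  in a component of \<open>- \<phi> ` K'\<close> contained in \<open>H\<close>, i.e. in a hole of \<open>\<phi> ` K'\<close> missing
  \<open>- \<Omega>\<close>; so \<open>H \<subseteq> \<phi> ` K'\<close>. By invariance of domain \<open>\<phi>\<close> is a homeomorphism near \<open>K'\<close>,
  so the preimage \<open>D\<close> of \<open>H\<close> is a connected open subset of \<open>K' - K\<close>. As the frontier of \<open>H\<close>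
  lies in \<open>\<phi> ` K\<close>, the component \<open>C\<close> of \<open>- K\<close> containing \<open>D\<close> never meets the frontier of
  \<open>D\<close>, hence \<open>C = D \<subseteq> K' \<subseteq> G\<close>: a hole of \<open>K\<close> inside \<open>G\<close>.\<close>

lemma hole_subset_if_holes_meet:
  assumes "A \<subseteq> B" and "hole A H" and "H \<inter> S = {}"
    and holes_B: "\<And>H'. hole B H' \<Longrightarrow> H' \<inter> S \<noteq> {}"
  shows "H \<subseteq> B"
proof
  fix y assume "y \<in> H"
  have H: "H \<in> components (- A)" "bounded H"
    using \<open>hole A H\<close> by (auto simp: hole_def)
  show "y \<in> B"
  proof (rule ccontr)
    assume "y \<notin> B"
    define C where "C = connected_component_set (- B) y"
    have C: "C \<in> components (- B)"
      unfolding C_def components_iff using \<open>y \<notin> B\<close> by blast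
    have "C \<subseteq> H"
    proof (rule components_maximal[OF H(1)])
      show "connected C" "C \<subseteq> - A" "H \<inter> C \<noteq> {}"
        using C in_components_subset[OF C] in_components_connected \<open>A \<subseteq> B\<close> \<open>y \<in> H\<close> \<open>y \<notin> B\<close>
        by (auto simp: C_def)
    qed
    with H(2) C have "hole B C"
      by (auto simp: hole_def bounded_subset)
    with holes_B \<open>C \<subseteq> H\<close> \<open>H \<inter> S = {}\<close> show False
      by blast
  qed
qed

lemma connected_preimage_inj_on:
  fixes f :: "'a::euclidean_space \<Rightarrow> 'a"
  assumes "open U" "continuous_on U f" "inj_on f U" "connected H" "H \<subseteq> f ` U"
  shows "connected (U \<inter> f -` H)"
proof -
  obtain g where g: "homeomorphism U (f ` U) f g"
    using invariance_of_domain_homeomorphism[OF assms(1,2) _ assms(3)] by auto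
  have "U \<inter> f -` H = g ` H"
  proof
    show "U \<inter> f -` H \<subseteq> g ` H"
      using g unfolding homeomorphism_def by (auto intro: rev_image_eqI)
    show "g ` H \<subseteq> U \<inter> f -` H"
      using g \<open>H \<subseteq> f ` U\<close> unfolding homeomorphism_def by auto
  qed
  moreover have "continuous_on (f ` U) g"
    using g by (simp add: homeomorphism_def)
  ultimately show ?thesis
    using connected_continuous_image[OF continuous_on_subset[OF _ assms(5)] assms(4)] by simp
qed

lemma frontier_component_compl_subset:
  fixes S :: "'a::real_normed_vector set"
  assumes "closed S" "H \<in> components (- S)"
  shows "frontier H \<subseteq> S"
proof -
  have "frontier H \<subseteq> frontier (- S)"
    using frontier_of_components_subset[OF assms(2)] .
  also have "\<dots> \<subseteq> S"
    using frontier_subset_closed[OF assms(1)] by (simp add: frontier_complement)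
  finally show ?thesis .
qed

lemma connected_subset_open_if_closure_Int:
  assumes "connected C" "open D" "C \<inter> D \<noteq> {}" "C \<inter> closure D \<subseteq> D"
  shows "C \<subseteq> D"
proof -
  have "C \<inter> frontier D = {}"
    using assms(4) unfolding frontier_def interior_open[OF assms(2)] by blast
  then show ?thesis
    using connected_Int_frontier[OF assms(1,3)] by blast
qed

lemma component_compl_image_pullback:
  fixes f :: "'a::euclidean_space \<Rightarrow> 'a"
  assumes "open U" "continuous_on U f" "inj_on f U"
    and "compact K" "compact K'" "K \<subseteq> K'" "K' \<subseteq> U"
    and H: "H \<in> components (- f ` K)" "H \<subseteq> f ` K'"
  obtains C where "C \<in> components (- K)" "C \<subseteq> K'"
proof -
  define D where "D = U \<inter> f -` H"
  have mem_image_iff: "f x \<in> f ` A \<longleftrightarrow> x \<in> A" if "x \<in> U" "A \<subseteq> K'" for x A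
    using inj_on_image_mem_iff[OF assms(3) that(1)] that(2) assms(7) by blast
  have "continuous_on K f"
    using continuous_on_subset[OF assms(2)] assms(6,7) by blast
  then have "closed (f ` K)"
    using compact_continuous_image[OF _ assms(4)] compact_imp_closed by blast
  then have "open H"
    using open_components[OF _ H(1)] by blast
  then have "open D"
    unfolding D_def using continuous_open_preimage[OF assms(2,1)] by blast
  have "H \<subseteq> f ` U"
    using H(2) assms(7) by blast
  then have "connected D"
    unfolding D_def
    using connected_preimage_inj_on[OF assms(1-3) in_components_connected[OF H(1)]] by blast
  have D_K': "D \<subseteq> K'" and D_K: "D \<subseteq> - K"
    using H mem_image_iff[OF _ subset_refl] in_components_subset[OF H(1)]
    unfolding D_def by blast+
  have "D \<noteq> {}"
    using in_components_nonempty[OF H(1)] \<open>H \<subseteq> f ` U\<close> unfolding D_def by blast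
  then obtain C where C: "C \<in> components (- K)" "D \<subseteq> C"
    using exists_component_superset[OF D_K _ \<open>connected D\<close>] D_K by blast
  have clD: "closure D \<subseteq> K'"
    using closure_minimal[OF D_K' compact_imp_closed[OF assms(5)]] .
  have "f ` closure D \<subseteq> closure H"
  proof (rule image_closure_subset)
    show "continuous_on (closure D) f"
      using continuous_on_subset[OF assms(2)] clD assms(7) by blast
    show "f ` D \<subseteq> closure H"
      unfolding D_def using closure_subset by auto
  qed auto
  \<comment> \<open>by injectivity a point of \<open>C \<inter> closure D\<close> is not mapped into \<open>f ` K \<supseteq> frontier H\<close>\<close>
  have "p \<in> D" if "p \<in> C" "p \<in> closure D" for p
  proof -
    have "p \<in> U" "p \<notin> K"
      using that clD assms(7) in_components_subset[OF C(1)] by auto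
    then have "f p \<notin> frontier H"
      using frontier_component_compl_subset[OF \<open>closed (f ` K)\<close> H(1)] mem_image_iff[OF _ assms(6)]
      by blast
    moreover have "f p \<in> closure H"
      using \<open>f ` closure D \<subseteq> closure H\<close> that(2) by blast
    ultimately have "f p \<in> H"
      using closure_Un_frontier[of H] by blast
    with \<open>p \<in> U\<close> show ?thesis
      unfolding D_def by blast
  qed
  then have "C \<subseteq> D"
    using connected_subset_open_if_closure_Int[OF in_components_connected[OF C(1)] \<open>open D\<close>]
      C(2) \<open>D \<noteq> {}\<close> by blast
  with C(1) D_K' show thesis
    using that by blast
qed

theorem mainTheorem3:
  fixes G \<Omega> K K' :: "complex set" and \<phi> :: "complex \<Rightarrow> complex"
  assumes "open G" "connected G" "G \<noteq> {}"
    and "open \<Omega>" "connected \<Omega>" "\<Omega> \<noteq> {}"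
    and "compact K" "compact K'" "K \<subseteq> K'" "K' \<subseteq> G"
    and "\<phi> ` G \<subseteq> \<Omega>"
    and "\<exists>U. open U \<and> K' \<subseteq> U \<and> U \<subseteq> G \<and> \<phi> holomorphic_on U \<and> inj_on \<phi> U"
    and "omega_convex G K"
    and "omega_convex \<Omega> (\<phi> ` K')"
  shows "omega_convex \<Omega> (\<phi> ` K)"
proof -
  obtain U where U: "open U" "K' \<subseteq> U" "U \<subseteq> G" "continuous_on U \<phi>" "inj_on \<phi> U"
    using assms(12) holomorphic_on_imp_continuous_on by blast
  have "H \<inter> - \<Omega> \<noteq> {}" if hole: "hole (\<phi> ` K) H" for H
  proof
    assume "H \<inter> - \<Omega> = {}"
    moreover have "\<And>H'. hole (\<phi> ` K') H' \<Longrightarrow> H' \<inter> - \<Omega> \<noteq> {}"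
      using assms(14) by (simp add: omega_convex_def)
    ultimately have "H \<subseteq> \<phi> ` K'"
      using hole_subset_if_holes_meet[OF _ hole] assms(9) by blast
    then obtain C where C: "C \<in> components (- K)" "C \<subseteq> K'"
      using component_compl_image_pullback[OF U(1,4,5) assms(7-9) U(2)] hole
      by (auto simp: hole_def)
    moreover have "bounded C"
      using bounded_subset[OF compact_imp_bounded[OF assms(8)] C(2)] .
    ultimately have "hole K C"
      by (simp add: hole_def)
    then have "C \<inter> - G \<noteq> {}"
      using assms(13) by (simp add: omega_convex_def)
    with C(2) assms(10) show False
      by blast
  qed
  moreover have "compact (\<phi> ` K)"
    using compact_continuous_image[OF continuous_on_subset[OF U(4)] assms(7)] U(2) assms(9)
    by blast
  moreover have "\<phi> ` K \<subseteq> \<Omega>"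
    using assms(9-11) by blast
  ultimately show ?thesis
    by (simp add: omega_convex_def)
qed

end
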